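(* For any $n\in\mathbb{N}$ and any pair of convex bodies $K, B\subset\mathbb{R}^n$ that are symmetric with respect to the origin, one has \[ \hat{M}(K,B)\le \hat{M}\big(B^{\circ}, K^{\circ}/2\big)^2 . \]
   Context: For a set $A\subset\mathbb{R}^n$, $A^{\circ}:=\{u\in\mathbb{R}^n:\sup_{x\in A}\langle x,u\rangle\le 1\}$ is its polar body. For a set $K$ and a symmetric convex body $B$, the convex separation (convexified packing) number is \[\hat{M}(K,B):=\sup\{N:\ \exists\, x_1,\dots,x_N\in K \text{ such that } (x_j+\mathrm{int}\,B)\cap \mathrm{conv}\{x_i: i<j\}=\emptyset \text{ for all } j=1,\dots,N\},\] where $\mathrm{int}$ denotes interior and $\mathrm{conv}$ the convex hull; the value $+\infty$ is allowed. For $t>0$, $tB$ and $B/t$ denote dilates. *)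

theory Defs
  imports "HOL-Analysis.Analysis" "HOL-Library.Extended_Nat"
begin

definition polar :: "'a::euclidean_space set \<Rightarrow> 'a set" where
  "polar A = {u. \<forall>x\<in>A. x \<bullet> u \<le> 1}"

definition convex_body :: "'a::euclidean_space set \<Rightarrow> bool" where
  "convex_body K \<longleftrightarrow> compact K \<and> convex K \<and> interior K \<noteq> {}"

definition origin_symmetric :: "'a::euclidean_space set \<Rightarrow> bool" where
  "origin_symmetric K \<longleftrightarrow> (\<forall>x\<in>K. - x \<in> K)"

definition conv_sep_number :: "'a::euclidean_space set \<Rightarrow> 'a set \<Rightarrow> enat" where
  "conv_sep_number K B = Sup {enat N | N. \<exists>x :: nat \<Rightarrow> 'a.
      (\<forall>j<N. x j \<in> K) \<and>
      (\<forall>j<N. ((\<lambda>b. x j + b) ` interior B) \<inter> convex hull (x ` {..<j}) = {})}"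

end

theory Submission
  imports Defs
begin

(* Separating x_j from the convex hull of the earlier points yields u_j in the polar of B with
   u_j . x_j >= u_j . x_i + 1 for all i < j.  If the diagonal values u_a . x_a and u_b . x_b of
   two indices a < b differ by less than 1/2, then x_a . u_b <= x_a . u_a - 1/2; so the u_j of
   such a cluster, taken in decreasing order of j, are convexly separated with respect to half
   the polar of K, with the x_j as separating functionals, and a cluster has at most
   m = conv_sep_number (polar B) (polar K / 2) elements.  Equally spaced points on the segment
   from -u to u show in the same way that |x . u| < m/4 for x in K and u in the polar of B, so
   the diagonal values fall into m windows of length 1/2, which leaves at most m * m points. *)

definition conv_separated :: "'a::euclidean_space set \<Rightarrow> 'a set \<Rightarrow> (nat \<Rightarrow> 'a) \<Rightarrow> nat \<Rightarrow> bool" where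
  "conv_separated K B x N \<longleftrightarrow>
     (\<forall>j<N. x j \<in> K) \<and> (\<forall>j<N. (\<lambda>b. x j + b) ` interior B \<inter> convex hull (x ` {..<j}) = {})"

lemma conv_sep_number_ge:
  assumes "conv_separated K B x N"
  shows "enat N \<le> conv_sep_number K B"
  using assms unfolding conv_sep_number_def conv_separated_def by (blast intro: Sup_upper)

lemma conv_sep_number_le:
  assumes "\<And>x N. conv_separated K B x N \<Longrightarrow> N \<le> n"
  shows "conv_sep_number K B \<le> enat n"
  using assms unfolding conv_sep_number_def conv_separated_def by (auto intro!: Sup_least)

lemma abs_inner_le_1_if_in_polar:
  assumes "origin_symmetric B" "v \<in> polar B" "b \<in> B"
  shows "\<bar>b \<bullet> v\<bar> \<le> 1"
proof -
  have "- b \<in> B" using assms by (simp add: origin_symmetric_def)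
  then have "(- b) \<bullet> v \<le> 1" "b \<bullet> v \<le> 1" using assms by (auto simp: polar_def)
  then show ?thesis by simp
qed

lemma scaleR_in_polar:
  assumes "origin_symmetric B" "v \<in> polar B" "\<bar>t\<bar> \<le> 1"
  shows "t *\<^sub>R v \<in> polar B"
proof -
  have "t * (b \<bullet> v) \<le> 1" if "b \<in> B" for b
  proof -
    have "\<bar>t * (b \<bullet> v)\<bar> \<le> 1"
      using abs_inner_le_1_if_in_polar[OF assms(1,2) that] assms(3)
      by (simp add: abs_mult mult_le_one)
    then show ?thesis by simp
  qed
  then show ?thesis by (simp add: polar_def)
qed

lemma zero_in_interior_if_symmetric:
  assumes "convex B" "origin_symmetric B" "interior B \<noteq> {}"
  shows "0 \<in> interior B"
proof -
  obtain z where z: "z \<in> interior B" using assms(3) by auto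
  have "uminus ` B = B" using assms(2) unfolding origin_symmetric_def by force
  then have "- z \<in> interior B" using z interior_negations[of B] by auto
  then have "(1/2) *\<^sub>R z + (1/2) *\<^sub>R (- z) \<in> interior B"
    using z convex_interior[OF assms(1)]
    by (simp add: convex_def del: scaleR_minus_right)
  then show ?thesis by simp
qed

lemma inner_gt_if_in_interior_scaled_polar:
  assumes "origin_symmetric K" "t > 0" "z \<in> interior ((*\<^sub>R) t ` polar K)" "x \<in> K"
  shows "- t < x \<bullet> z"
proof (cases "x = 0")
  case True
  then show ?thesis using assms(2) by simp
next
  case False
  obtain e where e: "e > 0" "ball z e \<subseteq> (*\<^sub>R) t ` polar K"
    using assms(3) by (meson open_contains_ball open_interior interior_subset subset_trans)
  define w where "w = z - (e / 2 / norm x) *\<^sub>R x"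
  have "dist z w < e" using e False by (simp add: w_def dist_norm)
  then obtain v where v: "v \<in> polar K" "w = t *\<^sub>R v" using e by auto
  have "- x \<in> K" using assms(1,4) by (simp add: origin_symmetric_def)
  then have "(- x) \<bullet> v \<le> 1" using v by (auto simp: polar_def)
  then have "t * (- 1) \<le> t * (x \<bullet> v)" using assms(2) by (intro mult_left_mono) auto
  then have "- t \<le> x \<bullet> w" using v by simp
  moreover have "x \<bullet> w = x \<bullet> z - e / 2 * norm x"
    using False by (simp add: w_def inner_diff_right power2_norm_eq_inner[symmetric] power2_eq_square)
  moreover have "e / 2 * norm x > 0" using e False by simp
  ultimately show ?thesis by linarith
qed

lemma conv_sep_number_scaled_polar_ge:
  assumes "origin_symmetric K" "t > 0"
    and p: "\<forall>k<m. p k \<in> P" and y: "\<forall>k<m. y k \<in> K"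
    and gap: "\<forall>i k. i < k \<longrightarrow> k < m \<longrightarrow> y k \<bullet> p i \<le> y k \<bullet> p k - t"
  shows "enat m \<le> conv_sep_number P ((*\<^sub>R) t ` polar K)"
proof (rule conv_sep_number_ge)
  have "(\<lambda>b. p j + b) ` interior ((*\<^sub>R) t ` polar K) \<inter> convex hull (p ` {..<j}) = {}"
    if j: "j < m" for j
  proof -
    have hull: "convex hull (p ` {..<j}) \<subseteq> {w. y j \<bullet> w \<le> y j \<bullet> p j - t}"
      by (rule hull_minimal) (use gap j in \<open>auto simp: convex_halfspace_le\<close>)
    have "p j + z \<notin> convex hull (p ` {..<j})" if z: "z \<in> interior ((*\<^sub>R) t ` polar K)" for z
    proof
      assume "p j + z \<in> convex hull (p ` {..<j})"
      then have "y j \<bullet> z \<le> - t" using hull by (auto simp: inner_add_right)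
      moreover have "- t < y j \<bullet> z"
        using inner_gt_if_in_interior_scaled_polar[OF assms(1,2) z] y j by blast
      ultimately show False by simp
    qed
    then show ?thesis by blast
  qed
  then show "conv_separated P ((*\<^sub>R) t ` polar K) p m"
    using p by (simp add: conv_separated_def)
qed

lemma conv_sep_number_scaled_polar_ge_card:
  fixes A :: "'i::linorder set"
  assumes "origin_symmetric K" "t > 0" "finite A"
    and p: "\<forall>a\<in>A. p a \<in> P" and y: "\<forall>a\<in>A. y a \<in> K"
    and gap: "\<forall>a\<in>A. \<forall>b\<in>A. a < b \<longrightarrow> y a \<bullet> p b \<le> y a \<bullet> p a - t"
  shows "enat (card A) \<le> conv_sep_number P ((*\<^sub>R) t ` polar K)"
proof -
  \<comment> \<open>The certificate is read off in decreasing order of the indices.\<close>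
  define l where "l = rev (sorted_list_of_set A)"
  have len: "length l = card A" by (simp add: l_def)
  have "sorted_wrt (>) l"
    unfolding l_def sorted_wrt_rev using strict_sorted_list_of_set by blast
  then have decr: "l ! k < l ! i" if "i < k" "k < length l" for i k
    using sorted_wrt_nth_less that by fastforce
  have "set l = A" using assms(3) by (simp add: l_def)
  then have inA: "l ! k \<in> A" if "k < length l" for k
    using that nth_mem by blast
  have "enat (length l) \<le> conv_sep_number P ((*\<^sub>R) t ` polar K)"
  proof (rule conv_sep_number_scaled_polar_ge[OF assms(1,2)])
    show "\<forall>k<length l. (p \<circ> (!) l) k \<in> P" "\<forall>k<length l. (y \<circ> (!) l) k \<in> K"
      using p y inA by auto
    show "\<forall>i k. i < k \<longrightarrow> k < length l \<longrightarrow>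
        (y \<circ> (!) l) k \<bullet> (p \<circ> (!) l) i \<le> (y \<circ> (!) l) k \<bullet> (p \<circ> (!) l) k - t"
    proof (intro allI impI)
      fix i k assume "i < k" "k < length l"
      then show "(y \<circ> (!) l) k \<bullet> (p \<circ> (!) l) i \<le> (y \<circ> (!) l) k \<bullet> (p \<circ> (!) l) k - t"
        using gap inA[of i] inA[of k] decr[of i k] by simp
    qed
  qed
  then show ?thesis by (simp add: len)
qed

lemma conv_sep_number_scaled_polar_ge_inner:
  assumes "origin_symmetric K" "origin_symmetric B" "t > 0" "y \<in> K" "v \<in> polar B"
    and n: "t * (real n - 1) \<le> 2 * (y \<bullet> v)"
  shows "enat n \<le> conv_sep_number (polar B) ((*\<^sub>R) t ` polar K)"
proof -
  define c where "c = y \<bullet> v"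
  \<comment> \<open>Points spaced along the segment from \<open>-v\<close> to \<open>v\<close> so that \<open>y\<close> sees consecutive ones \<open>t\<close> apart.\<close>
  define p where "p k = (real k * t / c - 1) *\<^sub>R v" for k
  have k_le: "real k * t \<le> 2 * c" if "k < n" for k
  proof -
    have "real k \<le> real n - 1" using that by linarith
    then have "real k * t \<le> t * (real n - 1)" using assms(3) by (simp add: mult.commute)
    then show ?thesis using n by (simp add: c_def)
  qed
  show ?thesis
  proof (rule conv_sep_number_scaled_polar_ge[OF assms(1,3), where p = p and y = "\<lambda>_. y"])
    show "\<forall>k<n. y \<in> K" using assms(4) by simp
    show "\<forall>k<n. p k \<in> polar B"
    proof (intro allI impI)
      fix k assume k: "k < n"
      have "0 \<le> real k * t" using assms(3) by simp
      then have "0 \<le> c" using k_le[OF k] by linarith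
      then have "0 \<le> real k * t / c" "real k * t / c \<le> 2"
        using k_le[OF k] assms(3) by (auto simp: divide_simps)
      then have "\<bar>real k * t / c - 1\<bar> \<le> 1" by linarith
      then show "p k \<in> polar B" unfolding p_def by (rule scaleR_in_polar[OF assms(2,5)])
    qed
    show "\<forall>i k. i < k \<longrightarrow> k < n \<longrightarrow> y \<bullet> p i \<le> y \<bullet> p k - t"
    proof (intro allI impI)
      fix i k assume ik: "i < k" "k < n"
      have "t \<le> real k * t" using ik(1) assms(3) by simp
      then have "c > 0" using k_le[OF ik(2)] assms(3) by linarith
      then have y_p: "y \<bullet> p j = real j * t - c" for j by (simp add: p_def c_def algebra_simps)
      have "(real i + 1) * t \<le> real k * t"
        using ik(1) assms(3) by (intro mult_right_mono) auto
      then show "y \<bullet> p i \<le> y \<bullet> p k - t" unfolding y_p by (simp add: algebra_simps)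
    qed
  qed
qed

lemma abs_inner_lt_conv_sep_number:
  assumes "origin_symmetric K" "origin_symmetric B" "t > 0" "y \<in> K" "v \<in> polar B"
    and m: "conv_sep_number (polar B) ((*\<^sub>R) t ` polar K) = enat m"
  shows "2 * \<bar>y \<bullet> v\<bar> < t * real m"
proof -
  obtain w where w: "w \<in> polar B" "y \<bullet> w = \<bar>y \<bullet> v\<bar>"
  proof (cases "0 \<le> y \<bullet> v")
    case True
    then show ?thesis using that assms(5) by simp
  next
    case False
    have "(- 1) *\<^sub>R v \<in> polar B" by (rule scaleR_in_polar[OF assms(2,5)]) simp
    then show ?thesis using that False by simp
  qed
  define n where "n = nat \<lfloor>2 * \<bar>y \<bullet> v\<bar> / t\<rfloor> + 1"
  have "real n = of_int \<lfloor>2 * \<bar>y \<bullet> v\<bar> / t\<rfloor> + 1"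
    unfolding n_def using assms(3) by simp
  then have n_gt: "2 * \<bar>y \<bullet> v\<bar> / t < real n" and "real n - 1 \<le> 2 * \<bar>y \<bullet> v\<bar> / t"
    by linarith+
  then have "t * (real n - 1) \<le> 2 * (y \<bullet> w)"
    using assms(3) w(2) by (simp add: field_simps)
  then have "enat n \<le> enat m"
    using conv_sep_number_scaled_polar_ge_inner[OF assms(1-4) w(1)] m by simp
  then have "t * real n \<le> t * real m" using assms(3) by simp
  moreover have "2 * \<bar>y \<bullet> v\<bar> < t * real n" using n_gt assms(3) by (simp add: field_simps)
  ultimately show ?thesis by linarith
qed

lemma card_le_conv_sep_number_if_diagonal_close:
  fixes A :: "'i::linorder set"
  assumes "origin_symmetric K" "t > 0" "finite A"
    and u: "\<forall>a\<in>A. u a \<in> P" and x: "\<forall>a\<in>A. x a \<in> K"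
    and sep: "\<forall>a\<in>A. \<forall>b\<in>A. a < b \<longrightarrow> 1 \<le> u b \<bullet> (x b - x a)"
    and close: "\<forall>a\<in>A. \<forall>b\<in>A. \<bar>u a \<bullet> x a - u b \<bullet> x b\<bar> \<le> 1 - t"
  shows "enat (card A) \<le> conv_sep_number P ((*\<^sub>R) t ` polar K)"
proof (rule conv_sep_number_scaled_polar_ge_card[OF assms(1-3) u x])
  show "\<forall>a\<in>A. \<forall>b\<in>A. a < b \<longrightarrow> x a \<bullet> u b \<le> x a \<bullet> u a - t"
  proof (intro ballI impI)
    fix a b assume "a \<in> A" "b \<in> A" "a < b"
    then have "1 \<le> u b \<bullet> (x b - x a)" "\<bar>u a \<bullet> x a - u b \<bullet> x b\<bar> \<le> 1 - t"
      using sep close by auto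
    then show "x a \<bullet> u b \<le> x a \<bullet> u a - t" by (simp add: inner_diff_right inner_commute)
  qed
qed

lemma separating_functional_in_polar:
  fixes B :: "'a::euclidean_space set"
  assumes B: "convex B" "origin_symmetric B" "interior B \<noteq> {}"
    and disj: "(\<lambda>b. x0 + b) ` interior B \<inter> convex hull Q = {}"
  shows "\<exists>u\<in>polar B. \<forall>q\<in>Q. 1 \<le> u \<bullet> (x0 - q)"
proof (cases "Q = {}")
  case True
  then show ?thesis by (intro bexI[of _ 0]) (auto simp: polar_def)
next
  case False
  have "convex ((\<lambda>b. x0 + b) ` interior B)"
    using B(1) by (simp add: convex_interior convex_translation)
  then obtain a \<beta> where a: "a \<noteq> 0" "\<forall>w\<in>convex hull Q. a \<bullet> w \<le> \<beta>"
      "\<forall>w\<in>(\<lambda>b. x0 + b) ` interior B. \<beta> \<le> a \<bullet> w"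
    using separating_hyperplane_sets[of "convex hull Q" "(\<lambda>b. x0 + b) ` interior B"] disj False B(3)
    by (auto simp: convex_convex_hull)
  define s where "s = a \<bullet> x0 - \<beta>"
  have "uminus ` B = B" using B(2) unfolding origin_symmetric_def by force
  then have neg: "- z \<in> interior B" if "z \<in> interior B" for z
    using that interior_negations[of B] by auto
  have int_le: "a \<bullet> z \<le> s" if "z \<in> interior B" for z
  proof -
    have "\<beta> \<le> a \<bullet> (x0 + - z)" using a(3) neg[OF that] by blast
    then show ?thesis by (simp add: s_def inner_diff_right)
  qed
  have "B \<subseteq> closure (interior B)"
    using convex_closure_interior[OF B(1,3)] closure_subset by blast
  also have "closure (interior B) \<subseteq> {z. a \<bullet> z \<le> s}"
    by (rule closure_minimal) (use int_le in \<open>auto simp: closed_halfspace_le\<close>)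
  finally have B_le: "a \<bullet> b \<le> s" if "b \<in> B" for b
    using that by blast
  have s_pos: "s > 0"
  proof -
    obtain e where e: "e > 0" "ball 0 e \<subseteq> interior B"
      using zero_in_interior_if_symmetric[OF B] open_contains_ball_eq open_interior by blast
    have "(e / 2 / norm a) *\<^sub>R a \<in> interior B" using e a(1) by (intro subsetD[OF e(2)]) simp
    then have "a \<bullet> ((e / 2 / norm a) *\<^sub>R a) \<le> s" by (rule int_le)
    moreover have "a \<bullet> ((e / 2 / norm a) *\<^sub>R a) = e / 2 * norm a"
      using a(1) by (simp add: power2_norm_eq_inner[symmetric] power2_eq_square)
    moreover have "e / 2 * norm a > 0" using e a(1) by simp
    ultimately show ?thesis by linarith
  qed
  define u where "u = (1 / s) *\<^sub>R a"
  have "u \<in> polar B"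
    using B_le s_pos by (auto simp: polar_def u_def inner_commute divide_simps)
  moreover have "1 \<le> u \<bullet> (x0 - q)" if "q \<in> Q" for q
  proof -
    have "a \<bullet> q \<le> \<beta>" using a(2) hull_subset[of Q convex] that by blast
    then have "s \<le> a \<bullet> (x0 - q)" by (simp add: s_def inner_diff_right)
    then show ?thesis using s_pos by (simp add: u_def divide_simps)
  qed
  ultimately show ?thesis by blast
qed

lemma conv_separated_dual_functionals:
  fixes B :: "'a::euclidean_space set"
  assumes "convex B" "origin_symmetric B" "interior B \<noteq> {}" "conv_separated K B x N"
  obtains u where "\<And>j. j < N \<Longrightarrow> u j \<in> polar B"
    and "\<And>i j. i < j \<Longrightarrow> j < N \<Longrightarrow> 1 \<le> u j \<bullet> (x j - x i)"
proof -
  have "\<exists>v\<in>polar B. \<forall>i<j. 1 \<le> v \<bullet> (x j - x i)" if "j < N" for j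
    using separating_functional_in_polar[OF assms(1-3), of "x j" "x ` {..<j}"] assms(4) that
    by (auto simp: conv_separated_def)
  then obtain u where "\<forall>j<N. u j \<in> polar B \<and> (\<forall>i<j. 1 \<le> u j \<bullet> (x j - x i))"
    by metis
  then show ?thesis using that by blast
qed

lemma conv_separated_length_le_square:
  fixes K B :: "'a::euclidean_space set"
  assumes K: "origin_symmetric K" and B: "convex B" "origin_symmetric B" "interior B \<noteq> {}"
    and m: "conv_sep_number (polar B) ((*\<^sub>R) (1/2) ` polar K) = enat m"
    and x: "conv_separated K B x N"
  shows "N \<le> m * m"
proof -
  obtain u where u: "\<And>j. j < N \<Longrightarrow> u j \<in> polar B"
      and sep: "\<And>i j. i < j \<Longrightarrow> j < N \<Longrightarrow> 1 \<le> u j \<bullet> (x j - x i)"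
    using conv_separated_dual_functionals[OF B x] by blast
  have xK: "x j \<in> K" if "j < N" for j using x that by (simp add: conv_separated_def)
  \<comment> \<open>Each value \<open>u j \<bullet> x j\<close> lies in \<open>(-m/4, m/4)\<close>; cut this interval into \<open>m\<close> levels of length \<open>1/2\<close>.\<close>
  define level where "level j = \<lfloor>2 * (u j \<bullet> x j) + real m / 2\<rfloor>" for j
  have level: "level \<in> {..<N} \<rightarrow> {0..<int m}"
  proof
    fix j assume "j \<in> {..<N}"
    then have "2 * \<bar>x j \<bullet> u j\<bar> < 1/2 * real m"
      using abs_inner_lt_conv_sep_number[OF K B(2) _ xK u m] by simp
    then have "0 < 2 * (u j \<bullet> x j) + real m / 2" "2 * (u j \<bullet> x j) + real m / 2 < real m"
      by (auto simp: inner_commute abs_less_iff)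
    then show "level j \<in> {0..<int m}" unfolding level_def by (simp add: floor_less_iff)
  qed
  have fibre: "card (level -` {k} \<inter> {..<N}) \<le> m" for k
  proof -
    have "\<bar>u a \<bullet> x a - u b \<bullet> x b\<bar> \<le> 1 - 1/2"
      if "a \<in> level -` {k} \<inter> {..<N}" "b \<in> level -` {k} \<inter> {..<N}" for a b
    proof -
      have "\<bar>(2 * (u a \<bullet> x a) + real m / 2) - (2 * (u b \<bullet> x b) + real m / 2)\<bar> < 1"
        using that by (intro floor_eq_imp_diff_1) (simp add: level_def)
      then show ?thesis by linarith
    qed
    then have "enat (card (level -` {k} \<inter> {..<N})) \<le> enat m"
      unfolding m[symmetric] using u xK sep
      by (intro card_le_conv_sep_number_if_diagonal_close[OF K]) auto
    then show ?thesis by simp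
  qed
  show ?thesis
  proof (cases "N = 0")
    case False
    then have "{0..<int m} \<noteq> {}" using level by fastforce
    then obtain k where "N \<le> card (level -` {k} \<inter> {..<N}) * card {0..<int m}"
      using pigeonhole_card[OF level] by auto
    then show ?thesis using fibre[of k] by (simp add: order_trans)
  qed simp
qed

theorem theorem1:
  fixes K B :: "'a::euclidean_space set"
  assumes "convex_body K" and "origin_symmetric K"
    and "convex_body B" and "origin_symmetric B"
  shows "conv_sep_number K B \<le> (conv_sep_number (polar B) ((\<lambda>u. (1/2) *\<^sub>R u) ` polar K)) ^ 2"
proof (cases "conv_sep_number (polar B) ((*\<^sub>R) (1/2) ` polar K)")
  case (enat m)
  have B: "convex B" "interior B \<noteq> {}" using assms(3) by (auto simp: convex_body_def)
  have "conv_sep_number K B \<le> enat (m * m)"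
    using conv_separated_length_le_square[OF assms(2) B(1) assms(4) B(2) enat]
    by (rule conv_sep_number_le)
  then show ?thesis using enat by (simp add: power2_eq_square)
qed (simp add: power2_eq_square)

end
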